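(* Let $(M,\varphi,\xi,\eta,g)$ be a $3$-dimensional $f$-Kenmotsu manifold and let $\gamma(s)$ be a non-geodesic, arc-length parametrized proper triharmonic Frenet curve in $M$ with Frenet frame $\{T,N,B\}$, constant curvature $k_1$ and nonzero torsion $k_2$. Then $\gamma$ is a Frenet helix (i.e. $k_2$ is also constant). Further, with $A:=\frac r2+2(f^2+f')$ and $\Lambda:=\frac r2+3(f^2+f')$, $k_1$ and $k_2$ satisfy \begin{align*} &(k_1^2+k_2^2)^2=(2k_1^2+k_2^2)\big(A-\Lambda(\eta(T)^2+\eta(N)^2)\big)+k_1k_2\,\eta(T)\eta(B)\,\Lambda,\\ &\big(k_1k_2\eta(T)+(2k_1^2+k_2^2)\eta(B)\big)\Lambda\,\eta(N)=0. \end{align*}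
   Context: An almost contact metric manifold $(M^{2n+1},\varphi,\xi,\eta,g)$ has $\varphi^2=-I+\eta\otimes\xi$, $\eta(\xi)=1$, $\varphi\xi=0$, $\eta\circ\varphi=0$, $\eta(X)=g(X,\xi)$, $g(\varphi X,\varphi Y)=g(X,Y)-\eta(X)\eta(Y)$. It is $f$-Kenmotsu if $(\nabla_X\varphi)Y=f(g(\varphi X,Y)\xi-\eta(Y)\varphi X)$ and $\nabla_X\xi=f(X-\eta(X)\xi)$ for smooth $f$ with $df\wedge\eta=0$. In dimension 3 the curvature is $R(X,Y)Z=(\frac r2+2(f^2+f'))(g(Y,Z)X-g(X,Z)Y)-(\frac r2+3(f^2+f'))(g(Y,Z)\eta(X)\xi-g(X,Z)\eta(Y)\xi-\eta(X)\eta(Z)Y+\eta(Y)\eta(Z)X)$, with $r$ the scalar curvature and $f'$ the derivative of $f$ (regarded along the curve as functions of $s$). Frenet equations: $\nabla_TT=k_1N$, $\nabla_TN=-k_1T+k_2B$, $\nabla_TB=-k_2N$. A curve is triharmonic if $\tau_3(\gamma)=\nabla_T^5T+R(\nabla_T^3T,T)T-R(\nabla_T^2T,\nabla_TT)T=0$, and proper triharmonic if triharmonic but not harmonic (not a geodesic). A Frenet helix is a Frenet curve with constant nonzero curvature and torsion. *)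

theory Defs
  imports "HOL-Analysis.Analysis"
begin

(* Vector fields along the curve gamma, expressed in a parallel orthonormal
   frame along gamma: they become maps  real => 'a  into a 3-dimensional
   Euclidean space, the metric g becomes the inner product and the
   covariant derivative nabla_T becomes the ordinary derivative in s. *)

fun iter_vd :: "nat \<Rightarrow> (real \<Rightarrow> 'a::real_normed_vector) \<Rightarrow> real \<Rightarrow> 'a" where
  "iter_vd 0 F = F"
| "iter_vd (Suc n) F = (\<lambda>s. vector_derivative (iter_vd n F) (at s))"

definition smooth_along :: "real set \<Rightarrow> (real \<Rightarrow> 'a::real_normed_vector) \<Rightarrow> bool" where
  "smooth_along I F \<longleftrightarrow>
     (\<forall>n. \<forall>s\<in>I. (iter_vd n F has_vector_derivative iter_vd (Suc n) F s) (at s))"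

definition fK_curv :: "real \<Rightarrow> real \<Rightarrow> real \<Rightarrow> 'a::real_inner \<Rightarrow> 'a \<Rightarrow> 'a \<Rightarrow> 'a \<Rightarrow> 'a" where
  "fK_curv r f fp xi X Y Z =
     (r/2 + 2*(f^2 + fp)) *\<^sub>R ((Y \<bullet> Z) *\<^sub>R X - (X \<bullet> Z) *\<^sub>R Y)
   - (r/2 + 3*(f^2 + fp)) *\<^sub>R
       ( ((Y \<bullet> Z) * (X \<bullet> xi)) *\<^sub>R xi - ((X \<bullet> Z) * (Y \<bullet> xi)) *\<^sub>R xi
       - ((X \<bullet> xi) * (Z \<bullet> xi)) *\<^sub>R Y + ((Y \<bullet> xi) * (Z \<bullet> xi)) *\<^sub>R X)"

definition frenet_curve ::
  "real set \<Rightarrow> (real \<Rightarrow> 'a::real_inner) \<Rightarrow> (real \<Rightarrow> 'a) \<Rightarrow> (real \<Rightarrow> 'a)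
     \<Rightarrow> (real \<Rightarrow> real) \<Rightarrow> (real \<Rightarrow> real) \<Rightarrow> bool" where
  "frenet_curve I T N B k1 k2 \<longleftrightarrow>
     (\<forall>s\<in>I.
        T s \<bullet> T s = 1 \<and> N s \<bullet> N s = 1 \<and> B s \<bullet> B s = 1 \<and>
        T s \<bullet> N s = 0 \<and> T s \<bullet> B s = 0 \<and> N s \<bullet> B s = 0 \<and>
        k1 s > 0 \<and>
        (T has_vector_derivative (k1 s *\<^sub>R N s)) (at s) \<and>
        (N has_vector_derivative (- k1 s *\<^sub>R T s + k2 s *\<^sub>R B s)) (at s) \<and>
        (B has_vector_derivative (- k2 s *\<^sub>R N s)) (at s))"

definition fK_along :: "real set \<Rightarrow> (real \<Rightarrow> 'a::real_inner) \<Rightarrow> (real \<Rightarrow> 'a) \<Rightarrow> (real \<Rightarrow> real) \<Rightarrow> bool" where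
  "fK_along I T xi f \<longleftrightarrow>
     (\<forall>s\<in>I. xi s \<bullet> xi s = 1 \<and>
        (xi has_vector_derivative (f s *\<^sub>R (T s - (T s \<bullet> xi s) *\<^sub>R xi s))) (at s))"

(* tension field tau_3 along the curve, R s being the curvature tensor at gamma(s) *)
definition tau3 :: "(real \<Rightarrow> 'a \<Rightarrow> 'a \<Rightarrow> 'a \<Rightarrow> 'a) \<Rightarrow> (real \<Rightarrow> 'a::real_normed_vector) \<Rightarrow> real \<Rightarrow> 'a" where
  "tau3 R T s = iter_vd 5 T s + R s (iter_vd 3 T s) (T s) (T s)
                - R s (iter_vd 2 T s) (iter_vd 1 T s) (T s)"

definition triharmonic :: "real set \<Rightarrow> (real \<Rightarrow> 'a \<Rightarrow> 'a \<Rightarrow> 'a \<Rightarrow> 'a) \<Rightarrow> (real \<Rightarrow> 'a::real_normed_vector) \<Rightarrow> bool" where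
  "triharmonic I R T \<longleftrightarrow> (\<forall>s\<in>I. tau3 R T s = 0)"

definition proper_triharmonic :: "real set \<Rightarrow> (real \<Rightarrow> 'a \<Rightarrow> 'a \<Rightarrow> 'a \<Rightarrow> 'a) \<Rightarrow> (real \<Rightarrow> 'a::real_normed_vector) \<Rightarrow> bool" where
  "proper_triharmonic I R T \<longleftrightarrow> triharmonic I R T \<and> \<not> (\<forall>s\<in>I. iter_vd 1 T s = 0)"

definition frenet_helix :: "real set \<Rightarrow> (real \<Rightarrow> real) \<Rightarrow> (real \<Rightarrow> real) \<Rightarrow> bool" where
  "frenet_helix I k1 k2 \<longleftrightarrow>
     (\<exists>c1 c2. c1 \<noteq> 0 \<and> c2 \<noteq> 0 \<and> (\<forall>s\<in>I. k1 s = c1 \<and> k2 s = c2))"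

end

theory Submission
  imports Defs
begin

(* With k1 = c constant, T'' ... T^(5) are computed in the Frenet frame in terms of k2 and
   its first three derivatives.  The curvature terms of tau_3 have no T-component, so
   <tau_3, T> = 5 c^2 k2 k2'; hence k2' = 0 and k2 is constant on the connected set I.  For
   constant k2, <tau_3, N> = 0 and <tau_3, B> = 0 are c times the two stated equations. *)

definition fK_A :: "real \<Rightarrow> real \<Rightarrow> real \<Rightarrow> real" where
  "fK_A r f fp = r/2 + 2 * (f^2 + fp)"

definition fK_Lambda :: "real \<Rightarrow> real \<Rightarrow> real \<Rightarrow> real" where
  "fK_Lambda r f fp = r/2 + 3 * (f^2 + fp)"

lemma inner_fK_curv:
  "fK_curv r f fp xi X Y Z \<bullet> W =
     fK_A r f fp * ((Y \<bullet> Z) * (X \<bullet> W) - (X \<bullet> Z) * (Y \<bullet> W))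
   - fK_Lambda r f fp *
       ((Y \<bullet> Z) * (X \<bullet> xi) * (xi \<bullet> W) - (X \<bullet> Z) * (Y \<bullet> xi) * (xi \<bullet> W)
        - (X \<bullet> xi) * (Z \<bullet> xi) * (Y \<bullet> W) + (Y \<bullet> xi) * (Z \<bullet> xi) * (X \<bullet> W))"
  unfolding fK_curv_def fK_A_def fK_Lambda_def
  by (simp add: inner_diff_left inner_add_left algebra_simps)

lemma vector_derivative_eq_on_open:
  assumes "open I" "s \<in> I" "\<forall>x\<in>I. F x = G x" "(G has_vector_derivative G') (at s)"
  shows "vector_derivative F (at s) = G'"
proof -
  have "(F has_vector_derivative G') (at s)"
    by (rule has_vector_derivative_transform_within_open[OF assms(4,1,2)]) (use assms(3) in auto)
  then show ?thesis
    by (rule vector_derivative_at)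
qed

lemma iter_vd_Suc_eq_0_if_const_on_open:
  assumes "open I" "\<forall>x\<in>I. F x = C"
  shows "\<forall>x\<in>I. iter_vd (Suc n) F x = 0"
proof (induction n)
  case 0
  show ?case
    using vector_derivative_eq_on_open[OF assms(1) _ assms(2) has_vector_derivative_const] by simp
next
  case (Suc n)
  show ?case
    using vector_derivative_eq_on_open[OF assms(1) _ Suc has_vector_derivative_const] by simp
qed

lemma smooth_along_has_real_derivative:
  assumes "smooth_along I k" "s \<in> I"
  shows "(iter_vd n k has_real_derivative iter_vd (Suc n) k s) (at s)"
  using assms unfolding smooth_along_def has_real_derivative_iff_has_vector_derivative by blast

(* Stated for m = Suc n so that it also applies to numerals such as iter_vd 3. *)
lemma iter_vd_Suc_in_frenet_frame:
  assumes fc: "frenet_curve I T N B k1 k2" and "open I" and s: "s \<in> I"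
    and frame: "\<forall>x\<in>I. iter_vd n T x = a x *\<^sub>R T x + b x *\<^sub>R N x + d x *\<^sub>R B x"
    and "(a has_real_derivative a') (at s)" "(b has_real_derivative b') (at s)"
      "(d has_real_derivative d') (at s)"
    and "m = Suc n"
    and "a1 = a' - k1 s * b s" "b1 = k1 s * a s + b' - k2 s * d s" "d1 = k2 s * b s + d'"
  shows "iter_vd m T s = a1 *\<^sub>R T s + b1 *\<^sub>R N s + d1 *\<^sub>R B s"
proof -
  have frenet: "(T has_vector_derivative (k1 s *\<^sub>R N s)) (at s)"
    "(N has_vector_derivative (- k1 s *\<^sub>R T s + k2 s *\<^sub>R B s)) (at s)"
    "(B has_vector_derivative (- k2 s *\<^sub>R N s)) (at s)"
    using fc s unfolding frenet_curve_def by auto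
  have "((\<lambda>x. a x *\<^sub>R T x + b x *\<^sub>R N x + d x *\<^sub>R B x) has_vector_derivative
      a s *\<^sub>R (k1 s *\<^sub>R N s) + a' *\<^sub>R T s
      + (b s *\<^sub>R (- k1 s *\<^sub>R T s + k2 s *\<^sub>R B s) + b' *\<^sub>R N s)
      + (d s *\<^sub>R (- k2 s *\<^sub>R N s) + d' *\<^sub>R B s)) (at s)"
    (is "(_ has_vector_derivative ?D) _")
    using assms(5-7) frenet by (intro has_vector_derivative_add has_vector_derivative_scaleR)
  moreover have "?D = a1 *\<^sub>R T s + b1 *\<^sub>R N s + d1 *\<^sub>R B s"
    unfolding assms(9-11) by (simp add: algebra_simps)
  ultimately show ?thesis
    using vector_derivative_eq_on_open[OF \<open>open I\<close> s frame] \<open>m = Suc n\<close> by simp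
qed

lemma iter_vd_tangent_const_curvature:
  assumes fc: "frenet_curve I T N B k1 k2" and op: "open I" and k1: "\<forall>x\<in>I. k1 x = c"
    and sm: "smooth_along I k2"
  defines "D1 \<equiv> iter_vd 1 k2" and "D2 \<equiv> iter_vd 2 k2" and "D3 \<equiv> iter_vd 3 k2"
  shows "\<forall>x\<in>I. iter_vd 1 T x = 0 *\<^sub>R T x + c *\<^sub>R N x + 0 *\<^sub>R B x"
    and "\<forall>x\<in>I. iter_vd 2 T x = (- (c^2)) *\<^sub>R T x + 0 *\<^sub>R N x + (c * k2 x) *\<^sub>R B x"
    and "\<forall>x\<in>I. iter_vd 3 T x = 0 *\<^sub>R T x + (- (c^3) - c * k2 x ^ 2) *\<^sub>R N x + (c * D1 x) *\<^sub>R B x"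
    and "\<forall>x\<in>I. iter_vd 4 T x = (c^4 + c^2 * k2 x ^ 2) *\<^sub>R T x + (-3 * c * k2 x * D1 x) *\<^sub>R N x
      + (- (c^3) * k2 x - c * k2 x ^ 3 + c * D2 x) *\<^sub>R B x"
    and "\<forall>x\<in>I. iter_vd 5 T x = (5 * c^2 * k2 x * D1 x) *\<^sub>R T x
      + (c^5 + 2 * c^3 * k2 x ^ 2 + c * k2 x ^ 4 - 3 * c * D1 x ^ 2 - 4 * c * k2 x * D2 x) *\<^sub>R N x
      + (c * D3 x - c * D1 x * (c^2 + 6 * k2 x ^ 2)) *\<^sub>R B x"
proof -
  have dk: "(k2 has_real_derivative D1 x) (at x)"
    and dD1: "(D1 has_real_derivative D2 x) (at x)"
    and dD2: "(D2 has_real_derivative D3 x) (at x)" if "x \<in> I" for x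
    using smooth_along_has_real_derivative[OF sm that, of 0]
      smooth_along_has_real_derivative[OF sm that, of 1]
      smooth_along_has_real_derivative[OF sm that, of 2]
    unfolding D1_def D2_def D3_def by (simp_all add: numeral_eq_Suc)
  show it1: "\<forall>x\<in>I. iter_vd 1 T x = 0 *\<^sub>R T x + c *\<^sub>R N x + 0 *\<^sub>R B x"
    using fc k1 vector_derivative_at unfolding frenet_curve_def by fastforce
  show it2: "\<forall>x\<in>I. iter_vd 2 T x = (- (c^2)) *\<^sub>R T x + 0 *\<^sub>R N x + (c * k2 x) *\<^sub>R B x"
    using k1 by (intro ballI iter_vd_Suc_in_frenet_frame[OF fc op _ it1])
      (auto intro!: derivative_eq_intros simp: power2_eq_square)
  show it3: "\<forall>x\<in>I. iter_vd 3 T x = 0 *\<^sub>R T x + (- (c^3) - c * k2 x ^ 2) *\<^sub>R N x + (c * D1 x) *\<^sub>R B x"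
    using k1 by (intro ballI iter_vd_Suc_in_frenet_frame[OF fc op _ it2])
      (auto intro!: derivative_eq_intros dk simp: power2_eq_square power3_eq_cube)
  show it4: "\<forall>x\<in>I. iter_vd 4 T x = (c^4 + c^2 * k2 x ^ 2) *\<^sub>R T x + (-3 * c * k2 x * D1 x) *\<^sub>R N x
      + (- (c^3) * k2 x - c * k2 x ^ 3 + c * D2 x) *\<^sub>R B x"
    using k1 by (intro ballI iter_vd_Suc_in_frenet_frame[OF fc op _ it3])
      (auto intro!: derivative_eq_intros dk dD1
        simp: algebra_simps power2_eq_square power3_eq_cube numeral_eq_Suc)
  show "\<forall>x\<in>I. iter_vd 5 T x = (5 * c^2 * k2 x * D1 x) *\<^sub>R T x
      + (c^5 + 2 * c^3 * k2 x ^ 2 + c * k2 x ^ 4 - 3 * c * D1 x ^ 2 - 4 * c * k2 x * D2 x) *\<^sub>R N x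
      + (c * D3 x - c * D1 x * (c^2 + 6 * k2 x ^ 2)) *\<^sub>R B x"
    using k1 by (intro ballI iter_vd_Suc_in_frenet_frame[OF fc op _ it4])
      (auto intro!: derivative_eq_intros dk dD1 dD2
        simp: algebra_simps power2_eq_square power3_eq_cube numeral_eq_Suc)
qed

lemma tau3_fK_curv_frenet_components:
  fixes r f fp :: "real \<Rightarrow> real" and xi :: "real \<Rightarrow> 'a::real_inner"
  assumes fc: "frenet_curve I T N B k1 k2" and op: "open I" and k1: "\<forall>x\<in>I. k1 x = c"
    and sm: "smooth_along I k2" and s: "s \<in> I"
  defines "R \<equiv> \<lambda>s. fK_curv (r s) (f s) (fp s) (xi s)"
    and "A \<equiv> fK_A (r s) (f s) (fp s)" and "L \<equiv> fK_Lambda (r s) (f s) (fp s)"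
    and "eT \<equiv> T s \<bullet> xi s" and "eN \<equiv> N s \<bullet> xi s" and "eB \<equiv> B s \<bullet> xi s"
    and "k \<equiv> k2 s" and "k' \<equiv> iter_vd 1 k2 s" and "k'' \<equiv> iter_vd 2 k2 s"
    and "k''' \<equiv> iter_vd 3 k2 s"
  shows "tau3 R T s \<bullet> T s = 5 * c^2 * k * k'"
    and "tau3 R T s \<bullet> N s = c * ((c^2 + k^2)^2 - 3 * k'^2 - 4 * k * k''
           - (2 * c^2 + k^2) * (A - L * (eT^2 + eN^2)) - c * k * eT * eB * L - k' * eN * eB * L)"
    and "tau3 R T s \<bullet> B s = c * (k''' - k' * (c^2 + 6 * k^2) + A * k' - L * k' * (eT^2 + eB^2)
           + (c * k * eT + (2 * c^2 + k^2) * eB) * L * eN)"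
proof -
  have o: "T s \<bullet> T s = 1" "N s \<bullet> N s = 1" "B s \<bullet> B s = 1"
    "T s \<bullet> N s = 0" "T s \<bullet> B s = 0" "N s \<bullet> B s = 0"
    "N s \<bullet> T s = 0" "B s \<bullet> T s = 0" "B s \<bullet> N s = 0"
    using fc s unfolding frenet_curve_def by (auto simp: inner_commute)
  have e: "xi s \<bullet> T s = eT" "xi s \<bullet> N s = eN" "xi s \<bullet> B s = eB"
    unfolding eT_def eN_def eB_def by (simp_all add: inner_commute)
  note iter_vd_T = iter_vd_tangent_const_curvature[OF fc op k1 sm, THEN bspec, OF s,
      folded k_def k'_def k''_def k'''_def]
  show "tau3 R T s \<bullet> T s = 5 * c^2 * k * k'"
    and "tau3 R T s \<bullet> N s = c * ((c^2 + k^2)^2 - 3 * k'^2 - 4 * k * k''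
           - (2 * c^2 + k^2) * (A - L * (eT^2 + eN^2)) - c * k * eT * eB * L - k' * eN * eB * L)"
    and "tau3 R T s \<bullet> B s = c * (k''' - k' * (c^2 + 6 * k^2) + A * k' - L * k' * (eT^2 + eB^2)
           + (c * k * eT + (2 * c^2 + k^2) * eB) * L * eN)"
    unfolding tau3_def R_def inner_diff_left inner_add_left inner_fK_curv iter_vd_T
      A_def[symmetric] L_def[symmetric]
    by (simp_all add: inner_add_left inner_add_right inner_diff_left inner_diff_right o e
        eT_def[symmetric] eN_def[symmetric] eB_def[symmetric];
        simp add: algebra_simps power2_eq_square power3_eq_cube numeral_eq_Suc)+
qed

lemma triharmonic_frenet_torsion_constant:
  fixes r f fp :: "real \<Rightarrow> real" and xi :: "real \<Rightarrow> 'a::real_inner"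
  assumes fc: "frenet_curve I T N B k1 k2" and op: "open I" and "connected I"
    and k1: "\<forall>x\<in>I. k1 x = c" and "c \<noteq> 0" and sm: "smooth_along I k2"
    and "\<forall>x\<in>I. k2 x \<noteq> 0"
    and tau3_0: "\<forall>x\<in>I. tau3 (\<lambda>s. fK_curv (r s) (f s) (fp s) (xi s)) T x = 0"
  obtains c2 where "\<forall>x\<in>I. k2 x = c2"
proof -
  have "iter_vd 1 k2 x = 0" if "x \<in> I" for x
    using tau3_fK_curv_frenet_components(1)[OF fc op k1 sm that, of r f fp xi] tau3_0 assms(5,7) that
    by simp
  then have "k2 constant_on I"
    using smooth_along_has_real_derivative[OF sm, of _ 0] assms(3) op
    by (intro has_field_derivative_0_imp_constant_on) auto
  then show ?thesis
    using that unfolding constant_on_def by blast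
qed

lemma triharmonic_frenet_helix_equations:
  fixes r f fp :: "real \<Rightarrow> real" and xi :: "real \<Rightarrow> 'a::real_inner"
  assumes fc: "frenet_curve I T N B k1 k2" and op: "open I"
    and k1: "\<forall>x\<in>I. k1 x = c" and "c \<noteq> 0" and k2: "\<forall>x\<in>I. k2 x = c2"
    and sm: "smooth_along I k2"
    and s: "s \<in> I" and tau3_0: "tau3 (\<lambda>s. fK_curv (r s) (f s) (fp s) (xi s)) T s = 0"
  defines "A \<equiv> fK_A (r s) (f s) (fp s)" and "L \<equiv> fK_Lambda (r s) (f s) (fp s)"
    and "eT \<equiv> T s \<bullet> xi s" and "eN \<equiv> N s \<bullet> xi s" and "eB \<equiv> B s \<bullet> xi s"
  shows "(c^2 + c2^2)^2 = (2 * c^2 + c2^2) * (A - L * (eT^2 + eN^2)) + c * c2 * eT * eB * L"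
    and "(c * c2 * eT + (2 * c^2 + c2^2) * eB) * L * eN = 0"
proof -
  have "iter_vd 1 k2 s = 0" "iter_vd 2 k2 s = 0" "iter_vd 3 k2 s = 0"
    using iter_vd_Suc_eq_0_if_const_on_open[OF op k2, of 0]
      iter_vd_Suc_eq_0_if_const_on_open[OF op k2, of 1]
      iter_vd_Suc_eq_0_if_const_on_open[OF op k2, of 2] s
    by (simp_all add: numeral_eq_Suc)
  then have "c * ((c^2 + c2^2)^2 - (2 * c^2 + c2^2) * (A - L * (eT^2 + eN^2)) - c * c2 * eT * eB * L) = 0"
    and "c * ((c * c2 * eT + (2 * c^2 + c2^2) * eB) * L * eN) = 0"
    using tau3_fK_curv_frenet_components(2,3)[OF fc op k1 sm s, of r f fp xi] tau3_0 k2 s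
    unfolding A_def L_def eT_def eN_def eB_def by simp_all
  then show "(c^2 + c2^2)^2 = (2 * c^2 + c2^2) * (A - L * (eT^2 + eN^2)) + c * c2 * eT * eB * L"
    and "(c * c2 * eT + (2 * c^2 + c2^2) * eB) * L * eN = 0"
    using \<open>c \<noteq> 0\<close> by simp_all
qed

theorem theorem2:
  fixes T N B xi :: "real \<Rightarrow> 'a::euclidean_space"
    and k1 k2 r f fp :: "real \<Rightarrow> real"
    and I :: "real set"
  assumes "DIM('a) = 3"
    and "open I" and "connected I" and "I \<noteq> {}"
    and "frenet_curve I T N B k1 k2"
    and "smooth_along I T" and "smooth_along I N" and "smooth_along I B" and "smooth_along I k2"
    and "fK_along I T xi f"
    and "\<exists>c. \<forall>s\<in>I. k1 s = c"
    and "\<forall>s\<in>I. k2 s \<noteq> 0"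
    and "proper_triharmonic I (\<lambda>s. fK_curv (r s) (f s) (fp s) (xi s)) T"
  shows "frenet_helix I k1 k2 \<and>
    (\<forall>s\<in>I.
       let A = r s / 2 + 2 * ((f s)^2 + fp s);
           L = r s / 2 + 3 * ((f s)^2 + fp s);
           eT = T s \<bullet> xi s; eN = N s \<bullet> xi s; eB = B s \<bullet> xi s
       in ((k1 s)^2 + (k2 s)^2)^2
            = (2 * (k1 s)^2 + (k2 s)^2) * (A - L * (eT^2 + eN^2))
              + k1 s * k2 s * eT * eB * L
        \<and> (k1 s * k2 s * eT + (2 * (k1 s)^2 + (k2 s)^2) * eB) * L * eN = 0)"
proof -
  note fc = assms(5) and op = assms(2) and sm = assms(9)
  obtain c where k1: "\<forall>s\<in>I. k1 s = c"
    using assms(11) by blast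
  obtain s0 where s0: "s0 \<in> I"
    using assms(4) by blast
  have "c > 0"
    using fc s0 k1 unfolding frenet_curve_def by auto
  have tau3_0: "\<forall>s\<in>I. tau3 (\<lambda>s. fK_curv (r s) (f s) (fp s) (xi s)) T s = 0"
    using assms(13) unfolding proper_triharmonic_def triharmonic_def by blast
  obtain c2 where k2: "\<forall>s\<in>I. k2 s = c2"
    using triharmonic_frenet_torsion_constant[OF fc op assms(3) k1 _ sm assms(12) tau3_0] \<open>c > 0\<close>
    by auto
  have "frenet_helix I k1 k2"
    unfolding frenet_helix_def using \<open>c > 0\<close> k1 k2 assms(12) s0
    by (intro exI[of _ c] exI[of _ c2]) auto
  moreover note triharmonic_frenet_helix_equations[OF fc op k1 _ k2 sm _ tau3_0[rule_format]]
  ultimately show ?thesis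
    using \<open>c > 0\<close> k1 k2 unfolding Let_def fK_A_def fK_Lambda_def by auto
qed

end
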